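(* Let $\mathcal{H}\subseteq\mathcal{G}$ be a dense subsemigroup, let $k\ge2$, let $S\subseteq\mathcal{H}$ be strongly $k$-product-free, and let $W\subseteq S$ be a finite subset with unique products in $\mathcal{H}$. Then \[\bar{d}_{\mathcal{H}}(S)\le \frac{1}{1+\frac{\mu(W)}{M}+\cdots+\left(\frac{\mu(W)}{M}\right)^{k-1}}.\]
   Context: $\mathcal{A}$ is a finite alphabet with $|\mathcal{A}|\ge2$, $\mathcal{F}$ the free group over $\mathcal{A}$, elements identified with reduced words, $|w|$ the reduced length. Fix $x,y\in\mathcal{A}\cup\mathcal{A}^{-1}$ with $x\ne y^{-1}$, and let $\mathcal{G}$ be the subsemigroup of $\mathcal{F}$ consisting of reduced words beginning with $x$ and ending with $y$, together with the empty word. $M=\frac{2|\mathcal{A}|}{2|\mathcal{A}|-1}$. The measure $\mu$ on $\mathcal{F}$ is $\mu(\{w\})=\frac{1}{2|\mathcal{A}|(2|\mathcal{A}|-1)^{|w|-1}}$ for nonempty $w$ (each length layer has total weight one), extended additively to sets. For $A\subseteq\mathcal{F}$, $A_{\le n}=\{w\in A:|w|\le n\}$; for $A\subseteq\mathcal{H}$, $\bar{d}_{\mathcal{H}}(A)=\limsup_{n\to\infty}\mu(A_{\le n})/\mu(\mathcal{H}_{\le n})$. $\mathcal{H}$ is dense if there is a fixed $\delta>0$ with $\mu(\mathcal{H}_{\le n})>\delta\mu(\mathcal{F}_{\le n})>0$ for all large $n$; it is a subsemigroup if $\alpha\beta\in\mathcal{H}$ for all $\alpha,\beta\in\mathcal{H}$.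 $W\subseteq\mathcal{H}$ has unique products in $\mathcal{H}$ if the map $W\times\mathcal{H}\to\mathcal{H}$, $(w,h)\mapsto wh$, is injective. A set is strongly $k$-product-free if for every $2\le\ell\le k$ there are no $x_1,\dots,x_\ell,z$ in it with $x_1\cdots x_\ell=z$. *)

theory Defs
  imports "HOL-Analysis.Analysis"
begin

text \<open>Letters of the free group over the finite alphabet 'a: a pair (a, False) stands for
  the generator a, (a, True) for its inverse.  Elements of the free group are reduced words.\<close>

type_synonym 'a letter = "'a \<times> bool"
type_synonym 'a fword = "'a letter list"

definition inv_letter :: "'a letter \<Rightarrow> 'a letter" where
  "inv_letter l = (fst l, \<not> snd l)"

definition reduced :: "'a fword \<Rightarrow> bool" where
  "reduced w \<longleftrightarrow> (\<forall>i. Suc i < length w \<longrightarrow> w ! Suc i \<noteq> inv_letter (w ! i))"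

definition free_group :: "'a fword set" where
  "free_group = {w. reduced w}"

text \<open>Product of reduced words: cancel the end of the first word (given reversed) against
  the start of the second one.\<close>
fun mul_aux :: "'a fword \<Rightarrow> 'a fword \<Rightarrow> 'a fword" where
  "mul_aux [] v = v"
| "mul_aux (x # xs) [] = rev (x # xs)"
| "mul_aux (x # xs) (y # ys) =
     (if y = inv_letter x then mul_aux xs ys else rev (x # xs) @ y # ys)"

definition fmul :: "'a fword \<Rightarrow> 'a fword \<Rightarrow> 'a fword" where
  "fmul u v = mul_aux (rev u) v"

definition fprod :: "'a fword list \<Rightarrow> 'a fword" where
  "fprod xs = foldr fmul xs []"

definition semG :: "'a letter \<Rightarrow> 'a letter \<Rightarrow> 'a fword set" where
  "semG x y = {w. reduced w \<and> (w = [] \<or> (hd w = x \<and> last w = y))}"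

text \<open>The measure: weight 1/(2|A|(2|A|-1)^(|w|-1)) for nonempty w; the empty word gets
  weight 1 (its length layer has total weight one).\<close>
definition mu :: "'a::finite fword \<Rightarrow> real" where
  "mu w = (if w = [] then 1
           else 1 / (2 * real CARD('a) * (2 * real CARD('a) - 1) ^ (length w - 1)))"

definition muS :: "'a::finite fword set \<Rightarrow> real" where
  "muS A = (\<Sum>w\<in>A. mu w)"

definition upto_len :: "'a fword set \<Rightarrow> nat \<Rightarrow> 'a fword set" where
  "upto_len A n = {w \<in> A. length w \<le> n}"

definition Mconst :: "'a::finite itself \<Rightarrow> real" where
  "Mconst _ = 2 * real CARD('a) / (2 * real CARD('a) - 1)"

definition upper_density :: "'a::finite fword set \<Rightarrow> 'a fword set \<Rightarrow> ereal" where
  "upper_density H A =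
     limsup (\<lambda>n. ereal (muS (upto_len A n) / muS (upto_len H n)))"

definition dense_set :: "'a::finite fword set \<Rightarrow> bool" where
  "dense_set H \<longleftrightarrow> (\<exists>\<delta>>0. \<forall>\<^sub>F n in sequentially.
      muS (upto_len H n) > \<delta> * muS (upto_len (free_group :: 'a fword set) n) \<and>
      \<delta> * muS (upto_len (free_group :: 'a fword set) n) > 0)"

definition subsemigroup :: "'a fword set \<Rightarrow> bool" where
  "subsemigroup H \<longleftrightarrow> (\<forall>a\<in>H. \<forall>b\<in>H. fmul a b \<in> H)"

definition unique_products :: "'a fword set \<Rightarrow> 'a fword set \<Rightarrow> bool" where
  "unique_products W H \<longleftrightarrow> inj_on (\<lambda>(w, h). fmul w h) (W \<times> H)"

definition strongly_product_free :: "nat \<Rightarrow> 'a fword set \<Rightarrow> bool" where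
  "strongly_product_free k S \<longleftrightarrow>
     (\<forall>xs z. 2 \<le> length xs \<and> length xs \<le> k \<and> set xs \<subseteq> S \<and> z \<in> S \<longrightarrow> fprod xs \<noteq> z)"

end

theory Submission
  imports Defs
begin

text \<open>Put \<open>T 0 = S\<close> and \<open>T (i + 1) = W T i\<close>.  Words of \<open>H\<close> begin with \<open>x\<close> and end
  with \<open>y\<close>, and \<open>x\<close> is not the inverse of \<open>y\<close>, so products in \<open>H\<close> are plain
  concatenations.  Hence each element of \<open>T i\<close> is a product of \<open>i + 1\<close> elements of \<open>S\<close>,
  and strong \<open>k\<close>-product-freeness together with unique products makes
  \<open>T 0, \<dots>, T (k - 1)\<close> pairwise disjoint subsets of \<open>H\<close>.  Since
  \<open>\<mu>(w t) = M \<mu>(w) \<mu>(t)\<close>, passing from \<open>T i\<close> to \<open>T (i + 1)\<close> multiplies the measure by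
  \<open>M \<mu>(W) \<ge> \<mu>(W) / M\<close>, at the cost of shifting lengths by at most \<open>L = max |w|\<close>.  Every
  length layer has measure one, so the shifts cost only \<open>O(1)\<close>:
  \<open>\<mu>(H\<^sub>\<le>\<^sub>n) \<ge> (1 + c + \<dots> + c\<^sup>k\<^sup>-\<^sup>1) \<mu>(S\<^sub>\<le>\<^sub>n) - O(1)\<close> with \<open>c = \<mu>(W) / M\<close>, while
  \<open>\<mu>(H\<^sub>\<le>\<^sub>n)\<close> grows linearly because \<open>H\<close> is dense.\<close>

lemma fmul_Nil_left [simp]: "fmul [] v = v"
  by (simp add: fmul_def)

lemma fmul_Nil_right [simp]: "fmul u [] = u"
  by (cases "rev u") (auto simp: fmul_def)

lemma fmul_eq_append:
  assumes "u = [] \<or> v = [] \<or> hd v \<noteq> inv_letter (last u)"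
  shows "fmul u v = u @ v"
proof (cases "u = [] \<or> v = []")
  case True
  then show ?thesis by auto
next
  case False
  then obtain a r b s where "rev u = a # r" "v = b # s"
    by (metis list.exhaust rev_is_Nil_conv)
  moreover have "last u = a"
    using \<open>rev u = a # r\<close> by (metis last_rev list.sel(1) rev_rev_ident)
  ultimately show ?thesis
    using assms False by (simp add: fmul_def)
qed

lemma fmul_eq_append_semG:
  assumes "x \<noteq> inv_letter y" "u \<in> semG x y" "v \<in> semG x y"
  shows "fmul u v = u @ v"
  using assms by (intro fmul_eq_append) (auto simp: semG_def)

locale concat_subsemigroup =
  fixes H :: "'a fword set"
  assumes subsemigroup: "subsemigroup H"
    and fmul_eq_append_on: "u \<in> H \<Longrightarrow> v \<in> H \<Longrightarrow> fmul u v = u @ v"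

lemma semG_subset_free_group: "semG x y \<subseteq> free_group"
  by (auto simp: semG_def free_group_def)

lemma concat_subsemigroup_semG:
  assumes "x \<noteq> inv_letter y" "H \<subseteq> semG x y" "subsemigroup H"
  shows "concat_subsemigroup H"
  using assms by unfold_locales (auto intro: fmul_eq_append_semG)

fun prepend_pow :: "'a fword set \<Rightarrow> nat \<Rightarrow> 'a fword set \<Rightarrow> 'a fword set" where
  "prepend_pow W 0 S = S"
| "prepend_pow W (Suc i) S = (\<lambda>(w, t). w @ t) ` (W \<times> prepend_pow W i S)"

lemma Nil_notin_prepend_pow: "[] \<notin> S \<Longrightarrow> [] \<notin> prepend_pow W i S"
  by (induction i) auto

lemma Nil_notin_strongly_product_free:
  assumes "strongly_product_free k S" "k \<ge> 2"
  shows "[] \<notin> S"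
proof
  assume "([] :: 'a fword) \<in> S"
  moreover have "2 \<le> length [[], []]" "length [[], []] \<le> k" "set [[], []] \<subseteq> S"
    using assms(2) \<open>[] \<in> S\<close> by auto
  ultimately have "fprod [[], []] \<noteq> ([] :: 'a fword)"
    using assms(1) unfolding strongly_product_free_def by blast
  then show False by (simp add: fprod_def fmul_def)
qed

context concat_subsemigroup
begin

lemma append_mem:
  assumes "u \<in> H" "v \<in> H"
  shows "u @ v \<in> H"
proof -
  have "fmul u v \<in> H" using subsemigroup assms unfolding subsemigroup_def by blast
  then show ?thesis using fmul_eq_append_on[OF assms] by simp
qed

lemma prepend_pow_subset: "W \<subseteq> H \<Longrightarrow> S \<subseteq> H \<Longrightarrow> prepend_pow W i S \<subseteq> H"
  by (induction i) (auto intro: append_mem)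

lemma prepend_pow_eq_fprod:
  assumes "W \<subseteq> H" "S \<subseteq> H" "t \<in> prepend_pow W i S"
  shows "\<exists>ws s. length ws = i \<and> set ws \<subseteq> W \<and> s \<in> S \<and> t = fprod (ws @ [s])"
  using assms(3)
proof (induction i arbitrary: t)
  case 0
  then show ?case by (intro exI[of _ "[]"] exI[of _ t]) (simp add: fprod_def)
next
  case (Suc i)
  then obtain w t' where w: "w \<in> W" and t': "t' \<in> prepend_pow W i S" and t: "t = w @ t'"
    by auto
  obtain ws s where ws: "length ws = i" "set ws \<subseteq> W" "s \<in> S" and "t' = fprod (ws @ [s])"
    using Suc.IH[OF t'] by blast
  have "w \<in> H" "t' \<in> H" using w t' assms(1) prepend_pow_subset[OF assms(1,2)] by auto
  then have "t = fprod ((w # ws) @ [s])"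
    using t \<open>t' = fprod (ws @ [s])\<close> by (simp add: fprod_def fmul_eq_append_on)
  then show ?case using w ws by (intro exI[of _ "w # ws"] exI[of _ s]) simp
qed

lemma inj_on_append_unique_products:
  assumes "unique_products W H" "W \<subseteq> H"
  shows "inj_on (\<lambda>(w, t). w @ t) (W \<times> H)"
  using assms unfolding unique_products_def
  by (auto simp: inj_on_def fmul_eq_append_on subset_iff)

lemma prepend_pow_disjoint:
  assumes spf: "strongly_product_free k S" and "W \<subseteq> S" "S \<subseteq> H" "unique_products W H"
    and "i < j" "j < k"
  shows "prepend_pow W i S \<inter> prepend_pow W j S = {}"
  using assms(5,6)
proof (induction i arbitrary: j)
  case 0
  show ?case
  proof (rule ccontr)
    assume "prepend_pow W 0 S \<inter> prepend_pow W j S \<noteq> {}"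
    then obtain t where "t \<in> S" "t \<in> prepend_pow W j S" by auto
    then obtain ws s where ws: "length ws = j" "set ws \<subseteq> W" "s \<in> S" "t = fprod (ws @ [s])"
      using prepend_pow_eq_fprod assms(2,3) by blast
    moreover have "2 \<le> length (ws @ [s])" "length (ws @ [s]) \<le> k" "set (ws @ [s]) \<subseteq> S"
      using 0 ws(1-3) \<open>W \<subseteq> S\<close> by auto
    ultimately show False
      using spf \<open>t \<in> S\<close> unfolding strongly_product_free_def by blast
  qed
next
  case (Suc i)
  then obtain j' where j: "j = Suc j'" by (cases j) auto
  have inj: "inj_on (\<lambda>(w, t). w @ t) (W \<times> H)"
    using inj_on_append_unique_products assms by blast
  have sub: "prepend_pow W i S \<subseteq> H" "prepend_pow W j' S \<subseteq> H"
    using prepend_pow_subset assms(2,3) by auto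
  show ?case
  proof (rule ccontr)
    assume "prepend_pow W (Suc i) S \<inter> prepend_pow W j S \<noteq> {}"
    then obtain w t w' t' where "w \<in> W" "t \<in> prepend_pow W i S" "w' \<in> W"
      "t' \<in> prepend_pow W j' S" "w @ t = w' @ t'"
      unfolding j by auto
    then have "t = t'" using inj_onD[OF inj, of "(w, t)" "(w', t')"] sub by auto
    moreover have "prepend_pow W i S \<inter> prepend_pow W j' S = {}"
      using Suc.prems j by (intro Suc.IH) auto
    ultimately show False
      using \<open>t \<in> prepend_pow W i S\<close> \<open>t' \<in> prepend_pow W j' S\<close> by blast
  qed
qed

lemma disjoint_family_on_prepend_pow:
  assumes "strongly_product_free k S" "W \<subseteq> S" "S \<subseteq> H" "unique_products W H"
  shows "disjoint_family_on (\<lambda>i. prepend_pow W i S) {..<k}"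
  unfolding disjoint_family_on_def
proof (intro ballI impI)
  fix i j assume "i \<in> {..<k}" "j \<in> {..<k}" "i \<noteq> j"
  then show "prepend_pow W i S \<inter> prepend_pow W j S = {}"
    using prepend_pow_disjoint[OF assms, of i j] prepend_pow_disjoint[OF assms, of j i]
    by (cases "i < j") (auto simp: Int_commute)
qed

end

lemma two_card_minus_one_pos: "2 * real CARD('a::finite) - 1 > 0"
proof -
  have "real CARD('a) \<ge> 1" by (simp add: Suc_leI)
  then show ?thesis by linarith
qed

lemma mu_nonneg: "mu (w :: 'a::finite fword) \<ge> 0"
  using two_card_minus_one_pos[where 'a='a] by (simp add: mu_def)

lemma muS_nonneg: "muS (A :: 'a::finite fword set) \<ge> 0"
  unfolding muS_def by (intro sum_nonneg mu_nonneg)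

lemma muS_mono: "finite B \<Longrightarrow> A \<subseteq> B \<Longrightarrow> muS (A :: 'a::finite fword set) \<le> muS B"
  unfolding muS_def by (rule sum_mono2) (auto simp: mu_nonneg)

lemma Mconst_ge_1: "Mconst TYPE('a::finite) \<ge> 1"
  using two_card_minus_one_pos[where 'a='a] by (simp add: Mconst_def)

lemma divide_le_mult_of_one_le:
  fixes a M :: real
  assumes "0 \<le> a" "1 \<le> M"
  shows "a / M \<le> M * a"
proof -
  have "a / M \<le> a / 1" using assms by (intro divide_left_mono) auto
  also have "\<dots> \<le> M * a" using mult_right_mono[OF assms(2,1)] by simp
  finally show ?thesis .
qed

lemma mu_append:
  assumes "u \<noteq> []" "v \<noteq> []"
  shows "mu (u @ v :: 'a::finite fword) = Mconst TYPE('a) * mu u * mu v"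
proof -
  define A where "A = real CARD('a)"
  define q where "q = 2 * A - 1"
  have "q > 0" "A > 0" unfolding q_def A_def using two_card_minus_one_pos[where 'a='a] by auto
  obtain a b where ab: "length u = Suc a" "length v = Suc b"
    using assms by (metis length_greater_0_conv Suc_pred)
  have "mu (u @ v) = 1 / (2 * A * (q * q ^ a * q ^ b))"
    using assms ab by (simp add: mu_def A_def q_def power_add mult.assoc)
  also have "\<dots> = 2 * A / q * (1 / (2 * A * q ^ a)) * (1 / (2 * A * q ^ b))"
    using \<open>q > 0\<close> \<open>A > 0\<close> by (simp add: field_simps)
  also have "\<dots> = Mconst TYPE('a) * mu u * mu v"
    using assms ab by (simp add: mu_def Mconst_def A_def q_def)
  finally show ?thesis .
qed

lemma reduced_snoc:
  "reduced (w @ [l]) \<longleftrightarrow> reduced w \<and> (w = [] \<or> l \<noteq> inv_letter (last w))"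
proof (cases "w = []")
  case True
  then show ?thesis by (simp add: reduced_def)
next
  case False
  show ?thesis
  proof
    assume R: "reduced (w @ [l])"
    have "reduced w"
      unfolding reduced_def
    proof (intro allI impI)
      fix i assume "Suc i < length w"
      then show "w ! Suc i \<noteq> inv_letter (w ! i)"
        using R[unfolded reduced_def, rule_format, of i] by (simp add: nth_append)
    qed
    moreover have "l \<noteq> inv_letter (last w)"
      using R[unfolded reduced_def, rule_format, of "length w - 1"] False
      by (simp add: nth_append last_conv_nth)
    ultimately show "reduced w \<and> (w = [] \<or> l \<noteq> inv_letter (last w))" by simp
  next
    assume R: "reduced w \<and> (w = [] \<or> l \<noteq> inv_letter (last w))"
    show "reduced (w @ [l])"
      unfolding reduced_def
    proof (intro allI impI)
      fix i assume i: "Suc i < length (w @ [l])"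
      show "(w @ [l]) ! Suc i \<noteq> inv_letter ((w @ [l]) ! i)"
      proof (cases "Suc i < length w")
        case True
        then show ?thesis using R unfolding reduced_def by (simp add: nth_append)
      next
        case False
        then have "i = length w - 1" using i by simp
        then show ?thesis using R \<open>w \<noteq> []\<close> by (simp add: nth_append last_conv_nth)
      qed
    qed
  qed
qed

definition layer :: "nat \<Rightarrow> 'a fword set" where
  "layer j = {w. reduced w \<and> length w = j}"

lemma finite_layer: "finite (layer j :: 'a::finite fword set)"
  by (rule finite_subset[OF _ finite_lists_length_eq[of UNIV j]]) (auto simp: layer_def)

lemma layer_Suc_Suc:
  "layer (Suc (Suc j)) =
     (\<lambda>(w, l). w @ [l]) ` (SIGMA w:layer (Suc j). UNIV - {inv_letter (last w)})"
proof (intro set_eqI iffI)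
  fix v :: "'a fword"
  assume v: "v \<in> layer (Suc (Suc j))"
  then have "v \<noteq> []" by (auto simp: layer_def)
  with v have "v = butlast v @ [last v]" "length (butlast v) = Suc j"
    by (auto simp: layer_def)
  moreover from this have "reduced (butlast v) \<and> last v \<noteq> inv_letter (last (butlast v))"
    using v reduced_snoc[of "butlast v" "last v"] by (auto simp: layer_def)
  ultimately show "v \<in> (\<lambda>(w, l). w @ [l]) ` (SIGMA w:layer (Suc j). UNIV - {inv_letter (last w)})"
    by (intro rev_image_eqI[of "(butlast v, last v)"]) (auto simp: layer_def)
qed (auto simp: layer_def reduced_snoc)

lemma card_layer_Suc:
  "card (layer (Suc j) :: 'a::finite fword set) = 2 * CARD('a) * (2 * CARD('a) - 1) ^ j"
proof (induction j)
  case 0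
  have "layer (Suc 0) = (\<lambda>l. [l]) ` (UNIV :: 'a letter set)"
    by (auto simp: layer_def reduced_def length_Suc_conv)
  moreover have "card ((\<lambda>l. [l]) ` (UNIV :: 'a letter set)) = 2 * CARD('a)"
    by (subst card_image) (auto simp: inj_on_def card_UNIV_bool)
  ultimately show ?case by simp
next
  case (Suc j)
  have "inj_on (\<lambda>(w, l). w @ [l])
      (SIGMA w:layer (Suc j). UNIV - {inv_letter (last w)} :: ('a fword \<times> 'a letter) set)"
    by (auto simp: inj_on_def)
  then have "card (layer (Suc (Suc j)) :: 'a fword set)
      = (\<Sum>w\<in>layer (Suc j). card (UNIV - {inv_letter (last w)} :: 'a letter set))"
    unfolding layer_Suc_Suc by (simp add: card_image finite_layer)
  also have "\<dots> = card (layer (Suc j) :: 'a fword set) * (2 * CARD('a) - 1)"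
    by (simp add: card_UNIV_bool algebra_simps)
  also have "\<dots> = 2 * CARD('a) * (2 * CARD('a) - 1) ^ Suc j"
    by (simp only: Suc.IH power_Suc2 mult.assoc)
  finally show ?case .
qed

lemma muS_layer: "muS (layer j :: 'a::finite fword set) = 1"
proof (cases j)
  case 0
  then have "(layer j :: 'a fword set) = {[]}" by (auto simp: layer_def reduced_def)
  then show ?thesis unfolding muS_def by (simp add: mu_def)
next
  case (Suc i)
  define N where "N = 2 * real CARD('a) * (2 * real CARD('a) - 1) ^ i"
  have "N > 0" unfolding N_def using two_card_minus_one_pos[where 'a='a] by simp
  have "real (card (layer j :: 'a fword set)) = N"
    using two_card_minus_one_pos[where 'a='a] unfolding Suc card_layer_Suc N_def
    by (simp add: of_nat_diff)
  moreover have "muS (layer j :: 'a fword set) = (\<Sum>w\<in>(layer j :: 'a fword set). 1 / N)"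
    unfolding muS_def by (rule sum.cong) (auto simp: mu_def layer_def Suc N_def)
  ultimately show ?thesis using \<open>N > 0\<close> by simp
qed

lemma finite_upto_len: "finite (upto_len A n :: 'a::finite fword set)"
  by (rule finite_subset[OF _ finite_lists_length_le[of UNIV n]]) (auto simp: upto_len_def)

lemma muS_upto_len_free_group: "muS (upto_len (free_group :: 'a::finite fword set) n) = real n + 1"
proof -
  have "upto_len (free_group :: 'a fword set) n = (\<Union>j\<le>n. layer j)"
    by (auto simp: upto_len_def free_group_def layer_def)
  moreover have "muS (\<Union>j\<le>n. layer j :: 'a fword set)
      = (\<Sum>j\<le>n. muS (layer j :: 'a fword set))"
    unfolding muS_def
    by (rule sum.UNION_disjoint) (auto simp: finite_layer[unfolded layer_def] layer_def)
  ultimately show ?thesis by (simp add: muS_layer)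
qed

lemma muS_upto_len_le_shift:
  assumes "A \<subseteq> (free_group :: 'a::finite fword set)"
  shows "muS (upto_len A n) \<le> muS (upto_len A (n - m)) + real m"
proof -
  define B where "B = (\<Union>j\<in>{n - m<..n}. A \<inter> layer j)"
  have fin: "finite B" unfolding B_def by (auto intro: finite_subset[OF _ finite_layer])
  have "upto_len A n = upto_len A (n - m) \<union> B" "upto_len A (n - m) \<inter> B = {}"
    using assms by (auto simp: B_def upto_len_def layer_def free_group_def)
  then have "muS (upto_len A n) = muS (upto_len A (n - m)) + muS B"
    unfolding muS_def by (simp add: sum.union_disjoint finite_upto_len fin)
  moreover have "muS B \<le> real m"
  proof -
    have "muS B = (\<Sum>j\<in>{n - m<..n}. muS (A \<inter> layer j))"
      unfolding B_def muS_def
      by (rule sum.UNION_disjoint) (auto intro: finite_subset[OF _ finite_layer] simp: layer_def)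
    also have "\<dots> \<le> (\<Sum>j\<in>{n - m<..n}. 1)"
      by (rule sum_mono) (metis muS_layer muS_mono finite_layer inf_le2)
    also have "\<dots> \<le> real m"
      by simp
    finally show ?thesis .
  qed
  ultimately show ?thesis by simp
qed

lemma muS_append_image_ge:
  fixes W T :: "'a::finite fword set"
  assumes "finite W" "[] \<notin> W" "[] \<notin> T" "\<forall>w\<in>W. length w \<le> L"
    and inj: "inj_on (\<lambda>(w, t). w @ t) (W \<times> T)"
  shows "Mconst TYPE('a) * muS W * muS (upto_len T (n - L))
           \<le> muS (upto_len ((\<lambda>(w, t). w @ t) ` (W \<times> T)) n)"
proof -
  define f :: "'a fword \<times> 'a fword \<Rightarrow> 'a fword" where "f = (\<lambda>(w, t). w @ t)"
  define P where "P = W \<times> upto_len T (n - L)"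
  have "Mconst TYPE('a) * muS W * muS (upto_len T (n - L))
      = (\<Sum>w\<in>W. \<Sum>t\<in>upto_len T (n - L). Mconst TYPE('a) * mu w * mu t)"
    by (simp only: muS_def sum_distrib_left[of "Mconst TYPE('a)"] sum_product)
  also have "\<dots> = (\<Sum>(w, t)\<in>P. Mconst TYPE('a) * mu w * mu t)"
    unfolding P_def by (rule sum.cartesian_product)
  also have "\<dots> = (\<Sum>p\<in>P. mu (f p))"
  proof (rule sum.cong)
    fix p assume "p \<in> P"
    then obtain w t where "p = (w, t)" "w \<noteq> []" "t \<noteq> []"
      using assms(2,3) by (auto simp: P_def upto_len_def)
    then show "(case p of (w, t) \<Rightarrow> Mconst TYPE('a) * mu w * mu t) = mu (f p)"
      by (simp add: f_def mu_append)
  qed simp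
  also have "\<dots> = muS (f ` P)"
  proof -
    have "inj_on f P"
      using inj unfolding f_def by (rule inj_on_subset) (auto simp: P_def upto_len_def)
    then show ?thesis unfolding muS_def by (simp add: sum.reindex)
  qed
  also have "\<dots> \<le> muS (upto_len (f ` (W \<times> T)) n)"
  proof (rule muS_mono[OF finite_upto_len], safe)
    fix w t assume "(w, t) \<in> P"
    then have wt: "w \<in> W" "t \<in> T" "length t \<le> n - L" "t \<noteq> []"
      using assms(3) by (auto simp: P_def upto_len_def)
    then have "length (w @ t) \<le> n"
      using assms(4) by (cases t) auto
    then show "f (w, t) \<in> upto_len (f ` (W \<times> T)) n"
      using wt by (auto simp: upto_len_def f_def)
  qed
  finally show ?thesis unfolding f_def .
qed

lemma muS_prepend_pow_Suc_ge:
  fixes H W S :: "'a::finite fword set"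
  assumes "concat_subsemigroup H" "finite W" "[] \<notin> S" "W \<subseteq> S" "S \<subseteq> H"
    and "unique_products W H" "\<forall>w\<in>W. length w \<le> L" "c \<le> Mconst TYPE('a) * muS W"
  shows "c * muS (upto_len (prepend_pow W i S) (n - L))
           \<le> muS (upto_len (prepend_pow W (Suc i) S) n)"
proof -
  have "inj_on (\<lambda>(w, t). w @ t) (W \<times> H)"
    using concat_subsemigroup.inj_on_append_unique_products assms(1,4-6) by blast
  then have "inj_on (\<lambda>(w, t). w @ t) (W \<times> prepend_pow W i S)"
    by (rule inj_on_subset)
      (use concat_subsemigroup.prepend_pow_subset[OF assms(1), of W S i] assms(4,5) in auto)
  moreover have "[] \<notin> W" "[] \<notin> prepend_pow W i S"
    using assms(3,4) Nil_notin_prepend_pow by auto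
  ultimately have "Mconst TYPE('a) * muS W * muS (upto_len (prepend_pow W i S) (n - L))
      \<le> muS (upto_len (prepend_pow W (Suc i) S) n)"
    using muS_append_image_ge[OF \<open>finite W\<close> _ _ assms(7)] by simp
  moreover have "c * muS (upto_len (prepend_pow W i S) (n - L))
      \<le> Mconst TYPE('a) * muS W * muS (upto_len (prepend_pow W i S) (n - L))"
    using assms(8) by (rule mult_right_mono) (rule muS_nonneg)
  ultimately show ?thesis by linarith
qed

lemma muS_upto_len_iterate:
  assumes "c \<ge> 0"
    and step: "\<And>i n. c * muS (upto_len (T i) (n - L)) \<le> muS (upto_len (T (Suc i)) n)"
  shows "c ^ i * muS (upto_len (T 0) (n - i * L)) \<le> muS (upto_len (T i) n)"
proof (induction i arbitrary: n)
  case 0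
  then show ?case by simp
next
  case (Suc i)
  have "c ^ Suc i * muS (upto_len (T 0) (n - Suc i * L))
      = c * (c ^ i * muS (upto_len (T 0) (n - L - i * L)))"
    by (simp add: diff_diff_left add.commute)
  also have "\<dots> \<le> c * muS (upto_len (T i) (n - L))"
    using Suc.IH \<open>c \<ge> 0\<close> by (rule mult_left_mono)
  also have "\<dots> \<le> muS (upto_len (T (Suc i)) n)"
    by (rule step)
  finally show ?case .
qed

lemma dense_set_muS_at_top:
  assumes "dense_set H"
  shows "filterlim (\<lambda>n. muS (upto_len H n)) at_top sequentially"
proof -
  obtain \<delta> :: real where "\<delta> > 0"
    and ev: "\<forall>\<^sub>F n in sequentially. muS (upto_len H n) > \<delta> * (real n + 1)"
    using assms unfolding dense_set_def muS_upto_len_free_group by (auto elim: eventually_mono)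
  from ev have "\<forall>\<^sub>F n in sequentially. \<delta> * real n \<le> muS (upto_len H n)"
    by eventually_elim (use \<open>\<delta> > 0\<close> in \<open>simp add: algebra_simps\<close>)
  moreover have "filterlim (\<lambda>n. \<delta> * real n) at_top sequentially"
    using \<open>\<delta> > 0\<close>
    by (rule filterlim_tendsto_pos_mult_at_top[OF tendsto_const _ filterlim_real_sequentially])
  ultimately show ?thesis
    by (rule filterlim_at_top_mono[rotated])
qed

lemma upper_density_le_of_affine_bound:
  assumes "dense_set H" "C > 0"
    and bound: "\<And>n. C * muS (upto_len S n) \<le> muS (upto_len H n) + D"
  shows "upper_density H S \<le> ereal (1 / C)"
proof -
  define a where "a n = muS (upto_len S n)" for n
  define h where "h n = muS (upto_len H n)" for n
  have h_top: "filterlim h at_top sequentially"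
    unfolding h_def using assms(1) by (rule dense_set_muS_at_top)
  have "\<forall>\<^sub>F n in sequentially. a n / h n \<le> 1 / C + D / C / h n"
    using h_top unfolding filterlim_at_top_dense
  proof (rule eventually_mono[OF spec[of _ 0]])
    fix n assume "h n > 0"
    then have "a n / h n \<le> (h n + D) / C / h n"
      using bound[of n] \<open>C > 0\<close> unfolding a_def h_def
      by (intro divide_right_mono) (auto simp: field_simps)
    also have "\<dots> = 1 / C + D / C / h n"
      using \<open>h n > 0\<close> \<open>C > 0\<close> by (simp add: field_simps)
    finally show "a n / h n \<le> 1 / C + D / C / h n" .
  qed
  moreover have "(\<lambda>n. 1 / C + D / C / h n) \<longlonglongrightarrow> 1 / C + 0"
    by (intro tendsto_add tendsto_const tendsto_divide_0[OF tendsto_const]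
        filterlim_at_top_imp_at_infinity h_top)
  ultimately have "limsup (\<lambda>n. ereal (a n / h n)) \<le> ereal (1 / C)"
    using Limsup_mono[of "\<lambda>n. ereal (a n / h n)" "\<lambda>n. ereal (1 / C + D / C / h n)"]
      lim_imp_Limsup[OF sequentially_bot tendsto_ereal]
    by (fastforce elim: eventually_mono)
  then show ?thesis unfolding upper_density_def a_def h_def .
qed

lemma upper_density_le_geometric:
  fixes T :: "nat \<Rightarrow> 'a::finite fword set"
  assumes "dense_set H" "k \<ge> 1" "c \<ge> 0" "T 0 \<subseteq> free_group"
    and "\<And>i. i < k \<Longrightarrow> T i \<subseteq> H" "disjoint_family_on T {..<k}"
    and step: "\<And>i n. c * muS (upto_len (T i) (n - L)) \<le> muS (upto_len (T (Suc i)) n)"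
  shows "upper_density H (T 0) \<le> ereal (1 / (\<Sum>i<k. c ^ i))"
proof (rule upper_density_le_of_affine_bound[OF \<open>dense_set H\<close>])
  show "(\<Sum>i<k. c ^ i) > 0"
    using \<open>k \<ge> 1\<close> \<open>c \<ge> 0\<close> by (intro sum_pos2[of _ 0]) auto
  fix n
  have "(\<Sum>i<k. c ^ i) * muS (upto_len (T 0) n) = (\<Sum>i<k. c ^ i * muS (upto_len (T 0) n))"
    by (rule sum_distrib_right)
  also have "\<dots> \<le> (\<Sum>i<k. c ^ i * (muS (upto_len (T 0) (n - i * L)) + real (i * L)))"
    using \<open>c \<ge> 0\<close>
    by (intro sum_mono mult_left_mono muS_upto_len_le_shift[OF \<open>T 0 \<subseteq> free_group\<close>]) simp
  also have "\<dots> \<le> (\<Sum>i<k. muS (upto_len (T i) n)) + (\<Sum>i<k. c ^ i * real (i * L))"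
    unfolding distrib_left sum.distrib
    using muS_upto_len_iterate[of c T L, OF \<open>c \<ge> 0\<close> step] by (intro add_right_mono sum_mono)
  also have "disjoint_family_on (\<lambda>i. upto_len (T i) n) {..<k}"
    using \<open>disjoint_family_on T {..<k}\<close> by (auto simp: disjoint_family_on_def upto_len_def)
  then have "(\<Sum>i<k. muS (upto_len (T i) n)) = muS (\<Union>i<k. upto_len (T i) n)"
    unfolding muS_def by (intro sum.UNION_disjoint_family[symmetric]) (auto simp: finite_upto_len)
  also have "\<dots> \<le> muS (upto_len H n)"
    using assms(5) by (intro muS_mono finite_upto_len) (auto simp: upto_len_def)
  finally show "(\<Sum>i<k. c ^ i) * muS (upto_len (T 0) n)
      \<le> muS (upto_len H n) + (\<Sum>i<k. c ^ i * real (i * L))" by simp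
qed

theorem lemma3p1:
  fixes x y :: "'a::finite letter"
    and H S W :: "'a fword set"
    and k :: nat
  assumes "CARD('a) \<ge> 2"
    and "x \<noteq> inv_letter y"
    and "H \<subseteq> semG x y" and "subsemigroup H" and "dense_set H"
    and "k \<ge> 2"
    and "S \<subseteq> H" and "strongly_product_free k S"
    and "W \<subseteq> S" and "finite W" and "unique_products W H"
  shows "upper_density H S \<le>
     ereal (1 / (\<Sum>i<k. (muS W / Mconst TYPE('a)) ^ i))"
proof -
  interpret concat_subsemigroup H
    using concat_subsemigroup_semG assms(2-4) .
  have "[] \<notin> S" using Nil_notin_strongly_product_free assms(6,8) by blast
  obtain L where L: "\<forall>w\<in>W. length w \<le> L"
    using finite_maxlen[OF \<open>finite W\<close>] by (meson less_imp_le)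
  define c where "c = muS W / Mconst TYPE('a)"
  have "c \<ge> 0" "c \<le> Mconst TYPE('a) * muS W"
    unfolding c_def using Mconst_ge_1[where 'a='a] muS_nonneg[of W]
    by (simp_all add: divide_le_mult_of_one_le)
  define T where "T i = prepend_pow W i S" for i
  have "upper_density H (T 0) \<le> ereal (1 / (\<Sum>i<k. c ^ i))"
  proof (rule upper_density_le_geometric[of H k c T L])
    show "T 0 \<subseteq> free_group"
      using assms(3,7) semG_subset_free_group[of x y] by (auto simp: T_def)
    show "T i \<subseteq> H" for i
      unfolding T_def using assms(7,9) by (intro prepend_pow_subset) auto
    show "disjoint_family_on T {..<k}"
      unfolding T_def using assms(8,9,7,11) by (rule disjoint_family_on_prepend_pow)
    show "c * muS (upto_len (T i) (n - L)) \<le> muS (upto_len (T (Suc i)) n)" for i n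
      unfolding T_def using concat_subsemigroup_axioms assms(10) \<open>[] \<notin> S\<close> assms(9,7,11) L
        \<open>c \<le> _\<close> by (rule muS_prepend_pow_Suc_ge)
  qed (use assms(5,6) \<open>c \<ge> 0\<close> in auto)
  then show ?thesis unfolding T_def c_def by simp
qed

end
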